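(* Let $\beta\in[0,1]$, $n\in\mathbb{N}$, and let $u:\{k\in\mathbb{N}_0^3: k_1+k_2+k_3\le n\}\to[0,\infty]$ be a function such that for every $m\in\{0,\dots,n\}$ the restriction of $u$ to $\{k\in\mathbb{N}_0^3: k_1+k_2+k_3=m\}$ is an upper $\beta$-confidence bound for the parameter $p\mapsto \min\{\frac{1-p_2}{1-p_1},1\}$ in the trinomial model $(\mathrm{M}_{m,p}: p\in\mathrm{prob}(\{1,2,3\}))$. Then the function $k\mapsto u(k_{10},k_{01},k_{11})$ on $\{k\in\mathbb{N}_0^{\{0,1\}^2}:k_{++}=n\}$ is an upper $\beta$-confidence bound for the parameter $(\pi,\chi)\mapsto\chi^{(1)}_{1|1}$ in the restricted latent class model $\mathcal{P}_{2,\le}$.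
   Context: Convention: $x/0:=\infty$ for $x>0$. For a finite set $\mathcal{X}$, $\mathrm{prob}(\mathcal{X})$ is the set of probability densities on $\mathcal{X}$; $\mathrm{markov}(\mathcal{X},\mathcal{Y})$ the set of maps $(x,y)\mapsto p_{y|x}$ with $p_{\cdot|x}\in\mathrm{prob}(\mathcal{Y})$ for all $x$. $\mathrm{M}_{n,p}$ denotes the multinomial distribution with sample size $n$ and probability vector $p$. A subscript $+$ denotes summation over the replaced index. Let $\Theta_2:=\mathrm{prob}(\{0,1\})\times\mathrm{markov}(\{0,1\},\{0,1\}^2)$, $\theta=(\pi,\chi)$, $\mu(\theta)_j=\sum_{i=0}^1\pi_i\chi_{j|i}$ for $j\in\{0,1\}^2$, $P_\theta:=\mathrm{M}_{n,\mu(\theta)}$ on $\{k\in\mathbb{N}_0^{\{0,1\}^2}:k_{++}=n\}$. Put $\chi^{(1)}_{\iota|i}:=\chi_{\iota0|i}+\chi_{\iota1|i}$ and $\chi^{(2)}_{\iota|i}:=\chi_{0\iota|i}+\chi_{1\iota|i}$. The restricted latent class model is $\mathcal{P}_{2,\le}:=(P_\theta:\theta\in\Theta_{2,\le})$ with $\Theta_{2,\le}:=\{(\pi,\chi)\in\Theta_2:\chi^{(1)}_{0|0}\le\chi^{(2)}_{0|0}\}$. For a model $(P_\theta:\theta\in\Theta)$ and parameter $\kappa:\Theta\to\overline{\mathbb{R}}$, a measurable $\overline{\kappa}$ is an upper $\beta$-confidence bound if $P_\theta(\overline{\kappa}\ge\kappa(\theta))\ge\beta$ for all $\theta\in\Theta$.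 *)

theory Defs
  imports "HOL-Analysis.Analysis" "HOL-Library.Extended_Nonnegative_Real"
begin

definition prob_dens :: "'i set \<Rightarrow> ('i \<Rightarrow> real) \<Rightarrow> bool" where
  "prob_dens I p \<longleftrightarrow> (\<forall>i\<in>I. 0 \<le> p i) \<and> sum p I = 1"

definition mult_space :: "'i set \<Rightarrow> nat \<Rightarrow> ('i \<Rightarrow> nat) set" where
  "mult_space I n = {k. (\<forall>i. i \<notin> I \<longrightarrow> k i = 0) \<and> sum k I = n}"

definition mult_pmf :: "'i set \<Rightarrow> nat \<Rightarrow> ('i \<Rightarrow> real) \<Rightarrow> ('i \<Rightarrow> nat) \<Rightarrow> real" where
  "mult_pmf I n p k = fact n / (\<Prod>i\<in>I. fact (k i)) * (\<Prod>i\<in>I. p i ^ k i)"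

definition mult_prob :: "'i set \<Rightarrow> nat \<Rightarrow> ('i \<Rightarrow> real) \<Rightarrow> ('i \<Rightarrow> nat) set \<Rightarrow> real" where
  "mult_prob I n p A = (\<Sum>k\<in>mult_space I n \<inter> A. mult_pmf I n p k)"

text \<open>Upper beta-confidence bound kbar for kappa in the model (M_{n,mu theta} : theta in Theta).
  (Measurability is automatic on the finite discrete sample space.)\<close>
definition upper_conf_bound ::
  "real \<Rightarrow> 'i set \<Rightarrow> nat \<Rightarrow> 't set \<Rightarrow> ('t \<Rightarrow> 'i \<Rightarrow> real)
     \<Rightarrow> ('t \<Rightarrow> ennreal) \<Rightarrow> (('i \<Rightarrow> nat) \<Rightarrow> ennreal) \<Rightarrow> bool" where
  "upper_conf_bound \<beta> I n \<Theta> \<mu> \<kappa> kbar \<longleftrightarrow>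
     (\<forall>\<theta>\<in>\<Theta>. mult_prob I n (\<mu> \<theta>) {k. kbar k \<ge> \<kappa> \<theta>} \<ge> \<beta>)"

text \<open>Trinomial model: categories {1,2,3}.  Parameter min{(1-p2)/(1-p1),1}, with x/0 = \<infinity> for x>0
  (if p1 = 1 then p2 = 0 so the numerator is positive and the min equals 1).\<close>
definition trin_param :: "(nat \<Rightarrow> real) \<Rightarrow> ennreal" where
  "trin_param p = (if p 1 = 1 then 1 else ennreal (min ((1 - p 2) / (1 - p 1)) 1))"

definition trip :: "nat \<Rightarrow> nat \<Rightarrow> nat \<Rightarrow> (nat \<Rightarrow> nat)" where
  "trip a b c = (\<lambda>i. if i = 1 then a else if i = 2 then b else if i = 3 then c else 0)"

text \<open>Latent class model with two latent classes {0,1} and observations in {0,1}^2.\<close>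
definition Theta2 :: "((nat \<Rightarrow> real) \<times> (nat \<Rightarrow> nat \<times> nat \<Rightarrow> real)) set" where
  "Theta2 = {(w, c). prob_dens {0,1} w \<and> (\<forall>i\<in>{0,1}. prob_dens ({0,1} \<times> {0,1}) (c i))}"

definition mu2 :: "(nat \<Rightarrow> real) \<times> (nat \<Rightarrow> nat \<times> nat \<Rightarrow> real) \<Rightarrow> nat \<times> nat \<Rightarrow> real" where
  "mu2 \<theta> = (\<lambda>j. \<Sum>i\<in>{0,1}. fst \<theta> i * snd \<theta> i j)"

definition chi1 :: "(nat \<Rightarrow> nat \<times> nat \<Rightarrow> real) \<Rightarrow> nat \<Rightarrow> nat \<Rightarrow> real" where
  "chi1 c \<iota> i = c i (\<iota>, 0) + c i (\<iota>, 1)"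

definition chi2 :: "(nat \<Rightarrow> nat \<times> nat \<Rightarrow> real) \<Rightarrow> nat \<Rightarrow> nat \<Rightarrow> real" where
  "chi2 c \<iota> i = c i (0, \<iota>) + c i (1, \<iota>)"

definition Theta2_le :: "((nat \<Rightarrow> real) \<times> (nat \<Rightarrow> nat \<times> nat \<Rightarrow> real)) set" where
  "Theta2_le = {\<theta> \<in> Theta2. chi1 (snd \<theta>) 0 0 \<le> chi2 (snd \<theta>) 0 0}"

end

theory Submission
  imports Defs
begin

text \<open>Let \<open>\<mu> = mu2 \<theta>\<close> and \<open>s = \<mu>(1,0) + \<mu>(0,1) + \<mu>(1,1)\<close>. Under the multinomial law
  with sample size \<open>n\<close> and cell probabilities \<open>\<mu>\<close>, the number \<open>m\<close> of observations outside
  cell \<open>(0,0)\<close> is binomial with parameters \<open>n, s\<close>, and given \<open>m\<close> the counts of the cells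
  \<open>(1,0), (0,1), (1,1)\<close> are trinomial with the conditional law \<open>p\<close> of these cells. Hence the
  coverage probability of the derived bound is a binomial mixture of trinomial coverage
  probabilities, each at least \<open>\<beta>\<close> provided the target \<open>chi1 \<chi> 1 1\<close> is at most
  \<open>trin_param p\<close>. As \<open>(1 - p 2) / (1 - p 1) = (\<mu>(1,0) + \<mu>(1,1)) / (\<mu>(0,1) + \<mu>(1,1))\<close>, this
  is an elementary inequality between the two mixtures, and it is exactly where the
  restriction defining \<open>Theta2_le\<close> enters.\<close>

lemma sum_square01:
  "sum f ({0::nat,1} \<times> {0::nat,1}) = f (0,0) + f (0,1) + f (1,0) + f (1,1)"
proof -
  have "{0::nat,1} \<times> {0::nat,1} = {(0,0),(0,1),(1,0),(1,1)}" by auto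
  then show ?thesis by (simp add: algebra_simps)
qed

lemma prod_square01:
  "prod f ({0::nat,1} \<times> {0::nat,1}) = f (0,0) * f (0,1) * f (1,0) * f (1,1)"
proof -
  have "{0::nat,1} \<times> {0::nat,1} = {(0,0),(0,1),(1,0),(1,1)}" by auto
  then show ?thesis by (simp add: algebra_simps)
qed

lemma finite_mult_space:
  assumes "finite I"
  shows "finite (mult_space I n)"
proof (rule finite_subset)
  show "mult_space I n \<subseteq> {k. \<forall>i. (i \<in> I \<longrightarrow> k i \<in> {..n}) \<and> (i \<notin> I \<longrightarrow> k i = 0)}"
    using member_le_sum[OF _ _ assms] by (fastforce simp: mult_space_def)
  show "finite {k. \<forall>i. (i \<in> I \<longrightarrow> k i \<in> {..n}) \<and> (i \<notin> I \<longrightarrow> k i = 0)}"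
    using assms by (intro finite_set_of_finite_funs) auto
qed

lemma mult_pmf_nonneg:
  assumes "prob_dens I p"
  shows "0 \<le> mult_pmf I n p k"
  using assms unfolding mult_pmf_def prob_dens_def
  by (intro mult_nonneg_nonneg divide_nonneg_nonneg prod_nonneg zero_le_power) auto

lemma mult_prob_mono:
  assumes "finite I" "prob_dens I p" "A \<subseteq> B"
  shows "mult_prob I n p A \<le> mult_prob I n p B"
  unfolding mult_prob_def
  using assms finite_mult_space mult_pmf_nonneg by (intro sum_mono2) auto

lemma trip_components:
  "k \<in> mult_space {1,2,3} m \<Longrightarrow> trip (k 1) (k 2) (k 3) = k"
  by (auto simp: trip_def mult_space_def fun_eq_iff)

lemma trip_in_mult_space: "trip a b c \<in> mult_space {1,2,3} (a + b + c)"
  by (auto simp: trip_def mult_space_def)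

definition square_counts :: "nat \<Rightarrow> (nat \<Rightarrow> nat) \<Rightarrow> nat \<times> nat \<Rightarrow> nat" where
  "square_counts k00 k = (\<lambda>ij. if ij = (0,0) then k00 else if ij = (1,0) then k 1
     else if ij = (0,1) then k 2 else if ij = (1,1) then k 3 else 0)"

lemma trip_square_counts:
  assumes "k \<in> mult_space {1,2,3} m"
  shows "trip (square_counts k00 k (1,0)) (square_counts k00 k (0,1)) (square_counts k00 k (1,1)) = k"
  using trip_components[OF assms] by (simp add: square_counts_def)

lemma square_counts_in_mult_space:
  assumes "k \<in> mult_space {1,2,3} m" "m \<le> n"
  shows "square_counts (n - m) k \<in> mult_space ({0,1} \<times> {0,1}) n"
  using assms by (auto simp: mult_space_def square_counts_def sum_square01)

lemma sum_square01_of_mult_space: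
  fixes k :: "nat \<times> nat \<Rightarrow> nat"
  assumes "k \<in> mult_space ({0,1} \<times> {0,1}) n"
  shows "k (0,0) + k (0,1) + k (1,0) + k (1,1) = n"
proof -
  have "sum k ({0,1} \<times> {0,1}) = n" using assms by (simp only: mult_space_def mem_Collect_eq)
  then show ?thesis unfolding sum_square01 .
qed

lemma bij_betw_square_counts:
  "bij_betw (\<lambda>(m, k). square_counts (n - m) k)
     (SIGMA m:{..n}. mult_space {1,2,3} m) (mult_space ({0,1} \<times> {0,1}) n)"
proof (rule bij_betw_byWitness[where f' = "\<lambda>k :: nat \<times> nat \<Rightarrow> nat. (k (1,0) + k (0,1) + k (1,1),
    trip (k (1,0)) (k (0,1)) (k (1,1)))"])
  show "\<forall>x\<in>SIGMA m:{..n}. mult_space {1,2,3} m.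
      (\<lambda>k. (k (1,0) + k (0,1) + k (1,1), trip (k (1,0)) (k (0,1)) (k (1,1))))
        ((\<lambda>(m, k). square_counts (n - m) k) x) = x"
    using trip_square_counts by (auto simp: square_counts_def mult_space_def)
  show "\<forall>k\<in>mult_space ({0,1} \<times> {0,1}) n. (\<lambda>(m, k). square_counts (n - m) k)
      (k (1,0) + k (0,1) + k (1,1), trip (k (1,0)) (k (0,1)) (k (1,1))) = k"
  proof
    fix k :: "nat \<times> nat \<Rightarrow> nat" assume k: "k \<in> mult_space ({0,1} \<times> {0,1}) n"
    then have "k (0,0) + k (0,1) + k (1,0) + k (1,1) = n" by (rule sum_square01_of_mult_space)
    then show "(\<lambda>(m, k). square_counts (n - m) k)
        (k (1,0) + k (0,1) + k (1,1), trip (k (1,0)) (k (0,1)) (k (1,1))) = k"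
      using k by (auto simp: fun_eq_iff square_counts_def trip_def mult_space_def)
  qed
  show "(\<lambda>(m, k). square_counts (n - m) k) ` (SIGMA m:{..n}. mult_space {1,2,3} m)
      \<subseteq> mult_space ({0,1} \<times> {0,1}) n"
    using square_counts_in_mult_space by auto
  show "(\<lambda>k :: nat \<times> nat \<Rightarrow> nat. (k (1,0) + k (0,1) + k (1,1), trip (k (1,0)) (k (0,1)) (k (1,1))))
      ` mult_space ({0,1} \<times> {0,1}) n \<subseteq> (SIGMA m:{..n}. mult_space {1,2,3} m)"
  proof (rule image_subsetI)
    fix k :: "nat \<times> nat \<Rightarrow> nat" assume "k \<in> mult_space ({0,1} \<times> {0,1}) n"
    then have "k (0,0) + k (0,1) + k (1,0) + k (1,1) = n" by (rule sum_square01_of_mult_space)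
    then show "(k (1,0) + k (0,1) + k (1,1), trip (k (1,0)) (k (0,1)) (k (1,1)))
        \<in> (SIGMA m:{..n}. mult_space {1,2,3} m)"
      using trip_in_mult_space by simp
  qed
qed

lemma mult_pmf_square_counts:
  fixes \<mu> :: "nat \<times> nat \<Rightarrow> real" and p :: "nat \<Rightarrow> real"
  assumes scaled: "\<mu> (1,0) = s * p 1" "\<mu> (0,1) = s * p 2" "\<mu> (1,1) = s * p 3"
    and k: "k \<in> mult_space {1,2,3} m" and "m \<le> n"
  shows "mult_pmf ({0,1} \<times> {0,1}) n \<mu> (square_counts (n - m) k)
    = of_nat (n choose m) * \<mu> (0,0) ^ (n - m) * s ^ m * mult_pmf {1,2,3} m p k"
proof -
  have m: "m = k 1 + k 2 + k 3" using k by (simp add: mult_space_def)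
  have "real (n choose m) = fact n / (fact m * fact (n - m))"
    using \<open>m \<le> n\<close> by (simp add: binomial_fact)
  then show ?thesis
    unfolding mult_pmf_def prod_square01 scaled m
    by (simp add: square_counts_def power_add power_mult_distrib field_simps)
qed

lemma mult_prob_square_trip:
  fixes \<mu> :: "nat \<times> nat \<Rightarrow> real" and p :: "nat \<Rightarrow> real"
  assumes scaled: "\<mu> (1,0) = s * p 1" "\<mu> (0,1) = s * p 2" "\<mu> (1,1) = s * p 3"
  shows "mult_prob ({0,1} \<times> {0,1}) n \<mu> {k. trip (k (1,0)) (k (0,1)) (k (1,1)) \<in> A}
    = (\<Sum>m\<le>n. of_nat (n choose m) * \<mu> (0,0) ^ (n - m) * s ^ m * mult_prob {1,2,3} m p A)"
proof -
  let ?pmf = "mult_pmf ({0,1} \<times> {0,1}) n \<mu>"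
  have fin: "finite ({0::nat,1} \<times> {0::nat,1})" by simp
  have "mult_prob ({0,1} \<times> {0,1}) n \<mu> {k. trip (k (1,0)) (k (0,1)) (k (1,1)) \<in> A}
      = (\<Sum>k\<in>mult_space ({0,1} \<times> {0,1}) n. if trip (k (1,0)) (k (0,1)) (k (1,1)) \<in> A then ?pmf k else 0)"
    unfolding mult_prob_def sum.inter_restrict[OF finite_mult_space[OF fin]] mem_Collect_eq ..
  also have "\<dots> = (\<Sum>(m, k)\<in>(SIGMA m:{..n}. mult_space {1,2,3} m).
      if k \<in> A then ?pmf (square_counts (n - m) k) else 0)"
    by (subst sum.reindex_bij_betw[OF bij_betw_square_counts, symmetric])
      (rule sum.cong, auto simp only: trip_square_counts split: prod.split)
  also have "\<dots> = (\<Sum>m\<le>n. \<Sum>k\<in>mult_space {1,2,3} m.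
      if k \<in> A then of_nat (n choose m) * \<mu> (0,0) ^ (n - m) * s ^ m * mult_pmf {1,2,3} m p k else 0)"
    using mult_pmf_square_counts[OF scaled]
    by (subst sum.Sigma) (auto intro!: sum.cong simp: finite_mult_space simp del: One_nat_def)
  also have "\<dots> = (\<Sum>m\<le>n. of_nat (n choose m) * \<mu> (0,0) ^ (n - m) * s ^ m * mult_prob {1,2,3} m p A)"
    unfolding mult_prob_def
    by (simp add: sum.inter_restrict finite_mult_space sum_distrib_left if_distrib cong: if_cong)
  finally show ?thesis .
qed

lemma binomial_mixture_ge:
  fixes q s \<beta> :: real
  assumes "0 \<le> q" "0 \<le> s" "q + s = 1" and "\<And>m. m \<le> n \<Longrightarrow> \<beta> \<le> P m"
  shows "\<beta> \<le> (\<Sum>m\<le>n. of_nat (n choose m) * q ^ (n - m) * s ^ m * P m)"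
proof -
  have "\<beta> = \<beta> * (s + q) ^ n" using assms(3) by (simp add: add.commute)
  also have "\<dots> = (\<Sum>m\<le>n. of_nat (n choose m) * q ^ (n - m) * s ^ m * \<beta>)"
    by (simp add: binomial_ring sum_distrib_left mult_ac)
  also have "\<dots> \<le> (\<Sum>m\<le>n. of_nat (n choose m) * q ^ (n - m) * s ^ m * P m)"
    using assms by (intro sum_mono mult_left_mono) auto
  finally show ?thesis .
qed

text \<open>The point mass on cell 1 in the degenerate case \<open>s = 0\<close> is an arbitrary choice.\<close>

definition trin_cond :: "(nat \<times> nat \<Rightarrow> real) \<Rightarrow> nat \<Rightarrow> real" where
  "trin_cond \<mu> i = (let s = \<mu> (1,0) + \<mu> (0,1) + \<mu> (1,1) in
     if s = 0 then of_bool (i = 1)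
     else (if i = 1 then \<mu> (1,0) else if i = 2 then \<mu> (0,1) else if i = 3 then \<mu> (1,1) else 0) / s)"

lemma prob_dens_trin_cond:
  assumes "0 \<le> \<mu> (1,0)" "0 \<le> \<mu> (0,1)" "0 \<le> \<mu> (1,1)"
  shows "prob_dens {1,2,3} (trin_cond \<mu>)"
  using assms by (auto simp: prob_dens_def trin_cond_def Let_def add_divide_distrib[symmetric])

lemma trin_cond_scaled:
  assumes "0 \<le> \<mu> (1,0)" "0 \<le> \<mu> (0,1)" "0 \<le> \<mu> (1,1)"
  defines "s \<equiv> \<mu> (1,0) + \<mu> (0,1) + \<mu> (1,1)"
  shows "\<mu> (1,0) = s * trin_cond \<mu> 1" "\<mu> (0,1) = s * trin_cond \<mu> 2" "\<mu> (1,1) = s * trin_cond \<mu> 3"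
  using assms by (auto simp: trin_cond_def Let_def)

lemma ennreal_le_trin_param_trin_cond:
  assumes "0 \<le> \<mu> (1,0)" "0 \<le> \<mu> (0,1)" "0 \<le> \<mu> (1,1)" and "x \<le> 1"
    and odds: "x * (\<mu> (0,1) + \<mu> (1,1)) \<le> \<mu> (1,0) + \<mu> (1,1)"
  shows "ennreal x \<le> trin_param (trin_cond \<mu>)"
proof (cases "trin_cond \<mu> 1 = 1")
  case True
  then show ?thesis using \<open>x \<le> 1\<close> by (simp add: trin_param_def)
next
  case False
  define s where "s = \<mu> (1,0) + \<mu> (0,1) + \<mu> (1,1)"
  have "s \<noteq> 0" using False by (auto simp: trin_cond_def s_def)
  then have p: "trin_cond \<mu> 1 = \<mu> (1,0) / s" "trin_cond \<mu> 2 = \<mu> (0,1) / s"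
    by (simp_all add: trin_cond_def s_def)
  have "\<mu> (0,1) + \<mu> (1,1) \<noteq> 0"
  proof
    assume "\<mu> (0,1) + \<mu> (1,1) = 0"
    then have "trin_cond \<mu> 1 = 1" using \<open>s \<noteq> 0\<close> unfolding p by (simp add: s_def)
    then show False using False by contradiction
  qed
  then have pos: "0 < \<mu> (0,1) + \<mu> (1,1)" using assms(2,3) by linarith
  have "1 - trin_cond \<mu> 2 = (\<mu> (1,0) + \<mu> (1,1)) / s" "1 - trin_cond \<mu> 1 = (\<mu> (0,1) + \<mu> (1,1)) / s"
    using \<open>s \<noteq> 0\<close> unfolding p by (simp_all add: field_simps s_def)
  then have "(1 - trin_cond \<mu> 2) / (1 - trin_cond \<mu> 1) = (\<mu> (1,0) + \<mu> (1,1)) / (\<mu> (0,1) + \<mu> (1,1))"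
    using \<open>s \<noteq> 0\<close> by simp
  then have "x \<le> min ((1 - trin_cond \<mu> 2) / (1 - trin_cond \<mu> 1)) 1"
    using odds pos \<open>x \<le> 1\<close> by (simp add: pos_le_divide_eq)
  then show ?thesis using False by (simp add: trin_param_def ennreal_leI)
qed

lemma prob_dens_mu2:
  assumes "\<theta> \<in> Theta2"
  shows "prob_dens ({0,1} \<times> {0,1}) (mu2 \<theta>)"
proof -
  obtain w c where \<theta>: "\<theta> = (w, c)" and w: "prob_dens {0,1} w"
    and c: "\<And>i. i \<in> {0,1} \<Longrightarrow> prob_dens ({0,1} \<times> {0,1}) (c i)"
    using assms by (auto simp: Theta2_def)
  have "sum (mu2 \<theta>) ({0,1} \<times> {0,1}) = (\<Sum>i\<in>{0,1}. \<Sum>j\<in>{0,1} \<times> {0,1}. w i * c i j)"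
    unfolding mu2_def \<theta> fst_conv snd_conv by (rule sum.swap[symmetric])
  also have "\<dots> = (\<Sum>i\<in>{0,1}. w i * sum (c i) ({0,1} \<times> {0,1}))"
    by (simp only: sum_distrib_left)
  also have "\<dots> = 1" using w c by (simp add: prob_dens_def)
  finally show ?thesis
    using w c by (auto simp: prob_dens_def mu2_def \<theta> intro!: sum_nonneg mult_nonneg_nonneg)
qed

text \<open>The restriction \<open>chi1 \<chi> 0 0 \<le> chi2 \<chi> 0 0\<close> is equivalent to \<open>chi2 \<chi> 1 0 \<le> chi1 \<chi> 1 0\<close>;
  multiplying by \<open>chi1 \<chi> 1 1 \<le> 1\<close> bounds the contribution of each latent class separately.\<close>

lemma chi1_odds_bound:
  assumes "\<theta> \<in> Theta2_le"
  shows "chi1 (snd \<theta>) 1 1 * (mu2 \<theta> (0,1) + mu2 \<theta> (1,1)) \<le> mu2 \<theta> (1,0) + mu2 \<theta> (1,1)"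
proof -
  obtain w c where \<theta>: "\<theta> = (w, c)" by (cases \<theta>)
  have w: "0 \<le> w 0" "0 \<le> w 1" and c: "\<And>i j. i \<in> {0,1} \<Longrightarrow> j \<in> {0,1} \<times> {0,1} \<Longrightarrow> 0 \<le> c i j"
    and c1: "sum (c 1) ({0,1} \<times> {0,1}) = 1" and le: "chi1 c 0 0 \<le> chi2 c 0 0"
    using assms by (auto simp: Theta2_le_def Theta2_def prob_dens_def \<theta>)
  define x where "x = c 1 (1,0) + c 1 (1,1)"
  define a where "a = c 0 (0,1) + c 0 (1,1)"
  define A where "A = c 0 (1,0) + c 0 (1,1)"
  define b where "b = c 1 (0,1) + c 1 (1,1)"
  have "c 1 (0,0) + c 1 (0,1) + c 1 (1,0) + c 1 (1,1) = 1"
    using c1 unfolding sum_square01 .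
  moreover have "0 \<le> c 1 (0,0)" "0 \<le> c 1 (0,1)" "0 \<le> c 1 (1,0)" "0 \<le> c 1 (1,1)"
    "0 \<le> c 0 (0,1)" "0 \<le> c 0 (1,1)"
    by (simp_all add: c)
  ultimately have "0 \<le> x" "x \<le> 1" "b \<le> 1" "0 \<le> a"
    unfolding x_def b_def a_def by linarith+
  moreover have "a \<le> A"
    using le by (simp add: a_def A_def chi1_def chi2_def)
  ultimately have "x * a \<le> A" "x * b \<le> x"
    by (auto intro: order_trans[OF mult_left_le_one_le] mult_left_le)
  then have "w 0 * (x * a) \<le> w 0 * A" "w 1 * (x * b) \<le> w 1 * x"
    using w by (auto intro: mult_left_mono)
  then have "x * (w 0 * a + w 1 * b) \<le> w 0 * A + w 1 * x"
    by (simp add: algebra_simps)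
  then show ?thesis
    by (simp add: \<theta> mu2_def chi1_def x_def a_def A_def b_def algebra_simps)
qed

lemma chi1_le_one:
  assumes "\<theta> \<in> Theta2"
  shows "chi1 (snd \<theta>) 1 1 \<le> 1"
proof -
  obtain w c where \<theta>: "\<theta> = (w, c)" and c1: "prob_dens ({0,1} \<times> {0,1}) (c 1)"
    using assms by (auto simp: Theta2_def)
  then have "c 1 (0,0) + c 1 (0,1) + c 1 (1,0) + c 1 (1,1) = 1" "0 \<le> c 1 (0,0)" "0 \<le> c 1 (0,1)"
    unfolding prob_dens_def sum_square01 by auto
  then show ?thesis by (simp add: \<theta> chi1_def)
qed

theorem theorem2:
  fixes \<beta> :: real and n :: nat and u :: "(nat \<Rightarrow> nat) \<Rightarrow> ennreal"
  assumes "0 \<le> \<beta>" and "\<beta> \<le> 1" and "n \<ge> 1"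
    and "\<forall>m\<le>n. upper_conf_bound \<beta> {1,2,3} m {p. prob_dens {1,2,3} p} (\<lambda>p. p) trin_param u"
  shows "upper_conf_bound \<beta> ({0,1} \<times> {0,1}) n Theta2_le mu2 (\<lambda>\<theta>. ennreal (chi1 (snd \<theta>) 1 1))
           (\<lambda>k. u (trip (k (1,0)) (k (0,1)) (k (1,1))))"
  unfolding upper_conf_bound_def
proof
  fix \<theta> assume \<theta>: "\<theta> \<in> Theta2_le"
  then have "\<theta> \<in> Theta2" by (simp add: Theta2_le_def)
  define \<mu> where "\<mu> = mu2 \<theta>"
  define x where "x = chi1 (snd \<theta>) 1 1"
  have "prob_dens ({0,1} \<times> {0,1}) \<mu>"
    unfolding \<mu>_def using \<open>\<theta> \<in> Theta2\<close> by (rule prob_dens_mu2)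
  then have nonneg: "0 \<le> \<mu> (0,0)" "0 \<le> \<mu> (1,0)" "0 \<le> \<mu> (0,1)" "0 \<le> \<mu> (1,1)"
    and total: "\<mu> (0,0) + (\<mu> (1,0) + \<mu> (0,1) + \<mu> (1,1)) = 1"
    unfolding prob_dens_def sum_square01 by auto
  have bound: "ennreal x \<le> trin_param (trin_cond \<mu>)"
    using nonneg chi1_le_one[OF \<open>\<theta> \<in> Theta2\<close>] chi1_odds_bound[OF \<theta>]
    unfolding x_def \<mu>_def by (intro ennreal_le_trin_param_trin_cond)
  have "\<beta> \<le> mult_prob {1,2,3} m (trin_cond \<mu>) {k. ennreal x \<le> u k}" if "m \<le> n" for m
  proof -
    have "\<beta> \<le> mult_prob {1,2,3} m (trin_cond \<mu>) {k. trin_param (trin_cond \<mu>) \<le> u k}"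
      using assms(4) that prob_dens_trin_cond[OF nonneg(2-4)] by (simp add: upper_conf_bound_def)
    also have "\<dots> \<le> mult_prob {1,2,3} m (trin_cond \<mu>) {k. ennreal x \<le> u k}"
      using prob_dens_trin_cond[OF nonneg(2-4)] bound by (intro mult_prob_mono) auto
    finally show ?thesis .
  qed
  then have "\<beta> \<le> (\<Sum>m\<le>n. of_nat (n choose m) * \<mu> (0,0) ^ (n - m) * (\<mu> (1,0) + \<mu> (0,1) + \<mu> (1,1)) ^ m
      * mult_prob {1,2,3} m (trin_cond \<mu>) {k. ennreal x \<le> u k})"
    by (intro binomial_mixture_ge[OF nonneg(1) _ total]) (use nonneg in auto)
  also have "\<dots> = mult_prob ({0,1} \<times> {0,1}) n \<mu> {k. trip (k (1,0)) (k (0,1)) (k (1,1)) \<in> {k. ennreal x \<le> u k}}"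
    by (rule mult_prob_square_trip[OF trin_cond_scaled[OF nonneg(2-4)], symmetric])
  finally show "\<beta> \<le> mult_prob ({0,1} \<times> {0,1}) n (mu2 \<theta>)
      {k. ennreal (chi1 (snd \<theta>) 1 1) \<le> u (trip (k (1,0)) (k (0,1)) (k (1,1)))}"
    by (simp add: \<mu>_def x_def)
qed

end
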